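(* Let $f$ be a multiplicative function with (i) $|f(p)|\le C_0$ for all primes $p$; (ii) $\sum_{n\le X}|f(n)|\le C_1X$ for $X\ge1$; (iii) $\sum_{n\le X}|f(n)|^2\le C_1X(\log X)^A$ for $X\ge2$, and let $g:\mathbb{N}\to\mathbb{R}$ be any function. Let $N\ge2$ be an integer and $2\le s\le N$ a parameter. For integers $0\le i\le\log_2N$ put $$J_i=\min\left(i+1,\ \lfloor\log_2N\rfloor-i+1,\ \left\lfloor\tfrac12\log_2(64N/s)\right\rfloor\right),$$ and define the rectangles (in the $(p,n)$-plane) $$\mathcal R_i=(0,2^i]\times\left(\frac N{2^{i+1}},\frac N{2^i}\right],\qquad 0\le i\le\log_2N,$$ $$\mathcal R_{i,j,k}=\left(\frac{2^{i+j}}k,\frac{2^{i+j+1}}{2k-1}\right]\times\left(\frac{(k-1)N}{2^{i+j}},\frac{(2k-1)N}{2^{i+j+1}}\right],$$ for $0\le i\le\log_2N$, $1\le j\le J_i$, $2^{j-1}\le k\le2^j$. Then each $\mathcal R_{i,j,k}$ is of the form $(P,P']\times(N_1,N_1']$ with $$P'-P\ge\tfrac14,\qquad N_1'-N_1\ge\tfrac14,\qquad (P'-P)(N_1'-N_1)\gg s.$$ Moreover, let $\mathcal E$ be the set of pairs $(p,n)$, $p$ prime, $n$ a positive integer, with $pn\le N$, which lie in none of the rectangles $\mathcal R_i$, $\mathcal R_{i,j,k}$. Then for every fixed $\epsilon>0$, $$\sum_{(p,n)\in\mathcal E}f(p)(\log p)f(n)e(g(pn))\ll(\log N)^{\epsilon}\left(N+(Ns)^{1/2}\log(2N/s)\log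 s\right),$$ with implied constant depending only on $\epsilon,A,C_0,C_1$.
   Context: $e(x)=\exp(2\pi ix)$; $\log_2$ is the base-2 logarithm. *)

theory Defs
  imports Complex_Main "HOL-Computational_Algebra.Primes"
begin

definition e :: "real \<Rightarrow> complex" where
  "e x = exp (2 * complex_of_real pi * \<i> * complex_of_real x)"

definition multiplicative :: "(nat \<Rightarrow> complex) \<Rightarrow> bool" where
  "multiplicative f \<longleftrightarrow> f 1 = 1 \<and> (\<forall>m n. coprime m n \<longrightarrow> f (m * n) = f m * f n)"

definition Jidx :: "nat \<Rightarrow> real \<Rightarrow> nat \<Rightarrow> int" where
  "Jidx N s i = min (int i + 1)
      (min (\<lfloor>log 2 (real N)\<rfloor> - int i + 1) \<lfloor>log 2 (64 * real N / s) / 2\<rfloor>)"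

definition Rect_i :: "nat \<Rightarrow> nat \<Rightarrow> (real \<times> real) set" where
  "Rect_i N i = {0<..(2::real)^i} \<times> {real N / 2^(i+1) <.. real N / 2^i}"

definition Rect_ijk :: "nat \<Rightarrow> nat \<Rightarrow> nat \<Rightarrow> nat \<Rightarrow> (real \<times> real) set" where
  "Rect_ijk N i j k =
     {(2::real)^(i+j) / real k <.. 2^(i+j+1) / (2 * real k - 1)} \<times>
     {(real k - 1) * real N / 2^(i+j) <.. (2 * real k - 1) * real N / 2^(i+j+1)}"

definition valid_ijk :: "nat \<Rightarrow> real \<Rightarrow> nat \<Rightarrow> nat \<Rightarrow> nat \<Rightarrow> bool" where
  "valid_ijk N s i j k \<longleftrightarrow> real i \<le> log 2 (real N) \<and> 1 \<le> j \<and> int j \<le> Jidx N s i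
      \<and> 2^(j-1) \<le> k \<and> k \<le> 2^j"

definition exc_set :: "nat \<Rightarrow> real \<Rightarrow> (nat \<times> nat) set" where
  "exc_set N s = {(p, n). prime p \<and> 1 \<le> n \<and> p * n \<le> N
      \<and> (\<forall>i. real i \<le> log 2 (real N) \<longrightarrow> (real p, real n) \<notin> Rect_i N i)
      \<and> (\<forall>i j k. valid_ijk N s i j k \<longrightarrow> (real p, real n) \<notin> Rect_ijk N i j k)}"

end

theory Submission
  imports Defs "HOL-Library.Discrete_Functions"
begin

text \<open>
  Fix \<open>n \<le> N\<close> and \<open>i\<close> with \<open>2^i \<le> N/n < 2^(i+1)\<close>. If \<open>(p, n)\<close> lies outside \<open>R_i\<close>, then
  \<open>p > 2^i\<close>; if it also avoids every \<open>R_{i,j,k}\<close> with \<open>j \<le> J_i\<close>, an induction on \<open>j\<close> shows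
  \<open>p > N/n - 2^(i+2-J_i)\<close>. So these primes lie in an interval of length \<open>2^(i+2-J_i)\<close> below
  \<open>N/n\<close>, and Chebyshev's argument with the binomial coefficient bounds their \<open>\<Sum> log p\<close> by
  \<open>4 \<cdot> 2^i J_i / 2^J_i\<close>. Summing against \<open>|f(n)|\<close> over the dyadic block of \<open>n\<close> with
  hypothesis (ii) bounds the whole sum by \<open>\<lless> N \<Sum>_i J_i / 2^J_i\<close>, and this series is
  \<open>O(1 + (s/N)^(1/2) log(2N/s) log s)\<close>.

  The bound holds with the constant \<open>16 C_0 C_1\<close> and without the factor \<open>(log N)^\<epsilon>\<close>.
\<close>

section \<open>Primes in short intervals\<close>

lemma power_div_fact_le_exp:
  fixes x :: real
  assumes "x \<ge> 0"
  shows "x ^ n / fact n \<le> exp x"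
proof -
  have "(\<Sum>k\<in>{n}. x ^ k /\<^sub>R fact k) \<le> (\<Sum>k. x ^ k /\<^sub>R fact k)"
    by (rule sum_le_suminf[OF summable_exp_generic]) (use assms in auto)
  then show ?thesis
    using sums_unique[OF exp_converges[of x]] by (simp add: divide_inverse mult.commute)
qed

lemma prod_primes_between_dvd_binomial:
  fixes m y :: nat
  assumes "y \<le> m"
  shows "\<Prod>{p. prime p \<and> m < p \<and> p \<le> m + y} dvd (m + y choose y)"
proof -
  let ?S = "{p. prime p \<and> m < p \<and> p \<le> m + y}"
  have "\<Prod>?S dvd \<Prod>{1..m + y}"
    by (rule prod_dvd_prod_subset) (auto dest: prime_gt_0_nat)
  then have "\<Prod>?S dvd fact y * fact m * (m + y choose y)"
    using binomial_fact_lemma[of y "m + y"] by (simp add: fact_prod)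
  moreover have "coprime (\<Prod>?S) (fact y * fact m)"
  proof (rule prod_coprime_left)
    fix p assume "p \<in> ?S"
    then have "prime p" "\<not> p dvd fact y * fact m"
      using assms by (auto simp: prime_dvd_mult_iff prime_dvd_fact_iff)
    then show "coprime p (fact y * fact m)"
      by (rule prime_imp_coprime)
  qed
  ultimately show ?thesis
    by (simp add: coprime_dvd_mult_right_iff)
qed

lemma sum_ln_primes_between_le:
  fixes m y :: nat
  assumes "y \<le> m" "1 \<le> y"
  shows "(\<Sum>p | prime p \<and> m < p \<and> p \<le> m + y. ln (real p)) \<le> y * (1 + ln ((m + y) / y))"
proof -
  let ?S = "{p. prime p \<and> m < p \<and> p \<le> m + y}"
  have fin: "finite ?S"
    by (rule finite_subset[of _ "{..m + y}"]) auto
  have "\<Prod>?S \<le> m + y choose y"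
    using prod_primes_between_dvd_binomial[OF assms(1)] by (simp add: dvd_imp_le)
  then have "\<Prod>?S * fact y \<le> (m + y) ^ y"
    using binomial_fact_pow[of "m + y" y] by (meson le_trans mult_le_mono1)
  then have "real (\<Prod>?S * fact y) \<le> real ((m + y) ^ y)"
    by (simp only: of_nat_le_iff)
  then have "(\<Prod>p\<in>?S. real p) * fact y \<le> real (m + y) ^ y"
    by (simp del: of_nat_add)
  then have "(\<Prod>p\<in>?S. real p) \<le> real (m + y) ^ y / fact y"
    by (simp add: field_simps)
  moreover have "real y ^ y \<le> exp y * fact y"
    using power_div_fact_le_exp[of "real y" y] by (simp add: field_simps)
  ultimately have "(\<Prod>p\<in>?S. real p) * real y ^ y \<le> real (m + y) ^ y / fact y * (exp y * fact y)"
    by (intro mult_mono) auto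
  then have "(\<Prod>p\<in>?S. real p) * real y ^ y \<le> real (m + y) ^ y * exp y"
    by simp
  moreover have pos: "(\<Prod>p\<in>?S. real p) > 0"
    by (auto intro: prod_pos dest: prime_gt_0_nat)
  ultimately have "ln ((\<Prod>p\<in>?S. real p) * real y ^ y) \<le> ln (real (m + y) ^ y * exp y)"
    using assms by (subst ln_le_cancel_iff) auto
  then have "ln (\<Prod>p\<in>?S. real p) + y * ln y \<le> y * ln (m + y) + y"
    using pos assms by (simp add: ln_mult ln_realpow del: of_nat_add)
  moreover have "ln (\<Prod>p\<in>?S. real p) = (\<Sum>p\<in>?S. ln (real p))"
    using fin by (subst ln_prod) (auto dest: prime_gt_0_nat)
  ultimately show ?thesis
    using assms by (simp add: ln_div algebra_simps del: of_nat_add)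
qed

lemma mult_one_plus_ln_div_mono:
  fixes y1 y2 B :: real
  assumes "0 < y1" "y1 \<le> y2" "y2 \<le> B"
  shows "y1 * (1 + ln (B / y1)) \<le> y2 * (1 + ln (B / y2))"
proof -
  have "y1 * ln (y2 / y1) \<le> y2 - y1"
    using ln_le_minus_one[of "y2 / y1"] assms by (simp add: field_simps)
  moreover have "ln (B / y1) = ln (B / y2) + ln (y2 / y1)"
    using assms by (simp add: ln_div)
  moreover have "y1 * ln (B / y2) \<le> y2 * ln (B / y2)"
    using assms by (intro mult_right_mono) auto
  ultimately show ?thesis
    by (simp add: algebra_simps)
qed

lemma sum_ln_primes_in_top_interval_le:
  fixes B i J :: nat
  assumes "2 ^ i \<le> B" "B < 2 ^ (i + 1)" "1 \<le> J" "J \<le> i + 1"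
  shows "(\<Sum>p | prime p \<and> max (2 ^ i) (B - 2 ^ (i + 2 - J)) < p \<and> p \<le> B. ln (real p))
           \<le> 4 * 2 ^ i * real J / 2 ^ J"
proof -
  define D :: nat where "D = 2 ^ (i + 2 - J)"
  define m where "m = max (2 ^ i) (B - D)"
  define y where "y = B - m"
  have D_J: "real D * 2 ^ J = 4 * 2 ^ i" and D_J': "real D * 2 ^ (J - 1) = 2 ^ (i + 1)"
    using assms(3,4) by (simp_all add: D_def power_add[symmetric])
  have my: "m + y = B" "y \<le> m" "y \<le> D"
    using assms(1,2) by (auto simp: m_def y_def)
  have "D \<le> 2 ^ (i + 1)"
    unfolding D_def using assms(3) by (intro power_increasing) auto
  then have D_le: "real D \<le> 2 ^ (i + 1)"
    by (metis of_nat_le_iff of_nat_numeral of_nat_power)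
  have B_le: "real B \<le> 2 ^ (i + 1)"
    using assms(2) by (metis less_imp_le of_nat_le_iff of_nat_numeral of_nat_power)
  show ?thesis
  proof (cases "y = 0")
    case True
    then have "{p. prime p \<and> m < p \<and> p \<le> B} = {}"
      using my by auto
    then have "(\<Sum>p | prime p \<and> m < p \<and> p \<le> B. ln (real p)) = 0"
      by (simp only: sum.empty)
    then show ?thesis
      unfolding D_def[symmetric] m_def[symmetric] by simp
  next
    case False
    have "(\<Sum>p | prime p \<and> m < p \<and> p \<le> B. ln (real p)) \<le> y * (1 + ln (B / y))"
      using sum_ln_primes_between_le[of y m] False my by simp
    also have "\<dots> \<le> y * (1 + ln (2 ^ (i + 1) / y))"
      using False B_le my by (intro mult_left_mono add_left_mono ln_mono divide_right_mono) auto
    also have "\<dots> \<le> D * (1 + ln (2 ^ (i + 1) / D))"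
      using False my D_le by (intro mult_one_plus_ln_div_mono) auto
    also have "\<dots> = D * (1 + (real J - 1) * ln 2)"
    proof -
      have "2 ^ (i + 1) / real D = 2 ^ (J - 1)"
        using D_J' by (simp add: field_simps D_def)
      then show ?thesis
        using assms(3) by (simp add: ln_realpow)
    qed
    also have "\<dots> \<le> D * real J"
      using mult_left_le[of "ln 2" "real J - 1"] ln_2_less_1 assms(3) by (intro mult_left_mono) auto
    also have "\<dots> = 4 * 2 ^ i * real J / 2 ^ J"
      using D_J by (simp add: field_simps)
    finally show ?thesis
      unfolding D_def[symmetric] m_def[symmetric] .
  qed
qed

section \<open>Primes avoiding the rectangles over a fixed \<open>n\<close>\<close>

lemma floor_log2_of_nat: "1 \<le> N \<Longrightarrow> \<lfloor>log 2 (real N)\<rfloor> = int (floor_log N)"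
  by (simp add: floor_log_altdef)

lemma floor_log_div_bounds:
  fixes N n :: nat
  assumes "1 \<le> n" "n \<le> N"
  shows "n * 2 ^ floor_log (N div n) \<le> N" "N < n * 2 ^ (floor_log (N div n) + 1)"
proof -
  have "1 \<le> N div n"
    using div_le_mono[OF assms(2), of n] assms(1) by simp
  then have "2 ^ floor_log (N div n) \<le> N div n"
    by (simp add: floor_log_exp2_le)
  then show "n * 2 ^ floor_log (N div n) \<le> N"
    using assms(1) by (simp add: less_eq_div_iff_mult_less_eq mult.commute)
  have "N div n < 2 ^ (floor_log (N div n) + 1)"
    using floor_log_exp2_gt[of "N div n"] by simp
  then show "N < n * 2 ^ (floor_log (N div n) + 1)"
    using assms(1) by (simp add: div_less_iff_less_mult mult.commute)
qed

lemma right_of_Rect_ijk: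
  fixes N n p i j k :: nat
  assumes "(real p, real n) \<notin> Rect_ijk N i j k" "1 \<le> k"
    and "(real k - 1) * real N / 2 ^ (i + j) < real n" "real n \<le> (2 * real k - 1) * real N / 2 ^ (i + j + 1)"
    and "2 ^ (i + j) < real p * real k"
  shows "2 ^ (i + j + 1) < real p * (2 * real k - 1)"
proof -
  have "2 ^ (i + j) / real k < real p"
    using assms(2,5) by (simp add: divide_less_eq mult.commute)
  then have "2 ^ (i + j + 1) / (2 * real k - 1) < real p"
    using assms(1,3,4) by (auto simp: Rect_ijk_def)
  then show ?thesis
    using assms(2) by (simp add: divide_less_eq)
qed

lemma avoiding_rectangles_ceiling_bound_Suc:
  fixes N n p i j :: nat
  assumes N_pos: "real N > 0" and t0: "1 / 2 < real n * 2 ^ i / real N" "real n * 2 ^ i / real N \<le> 1"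
    and avoid: "\<And>k. 1 \<le> j \<Longrightarrow> 2 ^ (j - 1) \<le> k \<Longrightarrow> k \<le> 2 ^ j \<Longrightarrow>
                  (real p, real n) \<notin> Rect_ijk N i j k"
    and IH: "2 ^ (i + j) < real p * \<lceil>real n * 2 ^ (i + j) / real N\<rceil>"
  shows "2 ^ (i + Suc j) < real p * \<lceil>real n * 2 ^ (i + Suc j) / real N\<rceil>"
proof -
  define x where "x = real n * 2 ^ i / real N"
  define t where "t = real n * 2 ^ (i + j) / real N"
  define c where "c = \<lceil>t\<rceil>"
  have x_bounds: "1 / 2 < x" "x \<le> 1"
    using t0 by (simp_all only: x_def)
  have t_pow: "t = 2 ^ j * x" and t_Suc: "real n * 2 ^ (i + Suc j) / real N = 2 * t"
    by (simp_all add: x_def t_def power_add field_simps)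
  have c_bounds: "c - 1 < t" "t \<le> c"
    unfolding c_def by linarith+
  have IH': "2 ^ (i + j) < real p * c"
    using IH by (simp add: c_def t_def)
  text \<open>The ceiling either doubles or becomes \<open>2c - 1\<close>; in the second case \<open>n\<close> lies in the
    \<open>n\<close>-range of the rectangle with \<open>k = c\<close>.\<close>
  show ?thesis
  proof (cases "2 * c - 1 < 2 * t")
    case True
    then have "\<lceil>2 * t\<rceil> = 2 * c"
      using c_bounds by (intro ceiling_unique) auto
    then show ?thesis
      unfolding t_Suc using IH' by simp
  next
    case False
    then have ceil_Suc: "\<lceil>2 * t\<rceil> = 2 * c - 1"
      using c_bounds by (intro ceiling_unique) auto
    have "j \<noteq> 0"
    proof
      assume "j = 0"
      then have "c = 1"
        using t_pow unfolding c_def by (intro ceiling_unique; use x_bounds in simp)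
      then show False
        using False x_bounds t_pow \<open>j = 0\<close> by simp
    qed
    then have "2 ^ (j - 1) < t"
      using x_bounds t_pow by (cases j) auto
    then have c_gt: "(2::real) ^ (j - 1) < c"
      using c_bounds by linarith
    define k where "k = nat c"
    have "(0::real) < c"
      by (rule less_trans[OF _ c_gt]) simp
    then have k_real: "real k = c"
      by (simp add: k_def)
    have k_ge: "2 ^ (j - 1) \<le> k"
      using c_gt k_real by (metis less_imp_le of_nat_le_iff of_nat_numeral of_nat_power)
    have "c \<le> 2 ^ j"
      unfolding c_def using x_bounds t_pow by (simp add: ceiling_le_iff mult_left_le)
    then have k_le: "k \<le> 2 ^ j"
      by (simp add: k_def nat_le_iff)
    have "2 ^ (i + j + 1) < real p * (2 * real k - 1)"
    proof (rule right_of_Rect_ijk)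
      show "(real p, real n) \<notin> Rect_ijk N i j k"
        using avoid \<open>j \<noteq> 0\<close> k_ge k_le by simp
      show "1 \<le> k"
        using k_ge by (metis le_trans one_le_numeral one_le_power)
      show "(real k - 1) * real N / 2 ^ (i + j) < real n"
        "real n \<le> (2 * real k - 1) * real N / 2 ^ (i + j + 1)"
        using c_bounds False k_real N_pos by (simp_all add: t_def field_simps)
      show "2 ^ (i + j) < real p * real k"
        using IH' k_real by simp
    qed
    then show ?thesis
      unfolding t_Suc ceil_Suc using k_real by simp
  qed
qed

lemma avoiding_rectangles_ceiling_bound:
  fixes N n p i J j :: nat
  assumes dyadic: "n * 2 ^ i \<le> N" "N < n * 2 ^ (i + 1)"
    and p_gt: "2 ^ i < real p"
    and avoid: "\<And>j k. 1 \<le> j \<Longrightarrow> j \<le> J \<Longrightarrow> 2 ^ (j - 1) \<le> k \<Longrightarrow> k \<le> 2 ^ j \<Longrightarrow>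
                  (real p, real n) \<notin> Rect_ijk N i j k"
    and "j \<le> J"
  shows "2 ^ (i + j) < real p * \<lceil>real n * 2 ^ (i + j) / real N\<rceil>"
proof -
  have "real (n * 2 ^ i) \<le> real N" "real N < real (n * 2 ^ (i + 1))"
    using dyadic by (simp_all only: of_nat_le_iff of_nat_less_iff)
  then have dyadic_real: "real n * 2 ^ i \<le> real N" "real N < real n * 2 ^ (i + 1)"
    by simp_all
  have "0 < n"
    using dyadic(2) by (cases n) auto
  then have N_pos: "real N > 0"
    using dyadic_real(1) by (smt (verit) of_nat_0_less_iff zero_less_mult_iff zero_less_power)
  have t0: "1 / 2 < real n * 2 ^ i / real N" "real n * 2 ^ i / real N \<le> 1"
    using dyadic_real N_pos by (auto simp: field_simps)
  show ?thesis
    using \<open>j \<le> J\<close>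
  proof (induction j)
    case 0
    have "\<lceil>real n * 2 ^ i / real N\<rceil> = 1"
      by (intro ceiling_unique; use t0 in linarith)
    then show ?case
      using p_gt by simp
  next
    case (Suc j)
    then show ?case
      using avoid by (intro avoiding_rectangles_ceiling_bound_Suc[OF N_pos t0]) auto
  qed
qed

lemma sub_sq_div_lt_of_ceiling_bound:
  fixes u T p :: real
  assumes "0 < u" "0 < T" "0 \<le> p" "T < p * \<lceil>T / u\<rceil>"
  shows "u - u\<^sup>2 / T < p"
proof -
  have "T < p * (T / u + 1)"
    using assms(3,4) mult_left_mono[of "of_int \<lceil>T / u\<rceil>" "T / u + 1" p] by linarith
  then have "T * u / (T + u) < p"
    using assms(1,2) by (simp add: field_simps)
  moreover have "u - T * u / (T + u) = u\<^sup>2 / (T + u)"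
    using assms(1,2) by (simp add: field_simps power2_eq_square)
  moreover have "u\<^sup>2 / (T + u) < u\<^sup>2 / T"
    using assms(1,2) by (intro divide_strict_left_mono) auto
  ultimately show ?thesis
    by linarith
qed

lemma gt_of_not_in_Rect_i:
  fixes N n p i :: nat
  assumes "n * 2 ^ i \<le> N" "N < n * 2 ^ (i + 1)" "0 < p" "(real p, real n) \<notin> Rect_i N i"
  shows "2 ^ i < p"
proof -
  have "real (n * 2 ^ i) \<le> real N" "real N < real (n * 2 ^ (i + 1))"
    using assms(1,2) by (simp_all only: of_nat_le_iff of_nat_less_iff)
  then have "real n \<in> {real N / 2 ^ (i + 1)<..real N / 2 ^ i}"
    by (simp add: field_simps)
  then have "real (2 ^ i) < real p"
    using assms(3,4) by (auto simp: Rect_i_def)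
  then show ?thesis
    by (simp only: of_nat_less_iff)
qed

definition avoiding_primes :: "nat \<Rightarrow> nat \<Rightarrow> nat \<Rightarrow> nat \<Rightarrow> nat set" where
  "avoiding_primes N i J n = {p. prime p \<and> p * n \<le> N \<and> (real p, real n) \<notin> Rect_i N i \<and>
     (\<forall>j k. 1 \<le> j \<longrightarrow> j \<le> J \<longrightarrow> 2 ^ (j - 1) \<le> k \<longrightarrow> k \<le> 2 ^ j \<longrightarrow>
        (real p, real n) \<notin> Rect_ijk N i j k)}"

lemma avoiding_primes_subset_top_interval:
  fixes N n i J :: nat
  assumes "1 \<le> n" "n \<le> N" "i = floor_log (N div n)" "J \<le> i + 1"
  shows "avoiding_primes N i J n
           \<subseteq> {p. prime p \<and> max (2 ^ i) (N div n - 2 ^ (i + 2 - J)) < p \<and> p \<le> N div n}"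
proof
  fix p assume "p \<in> avoiding_primes N i J n"
  then have p: "prime p" "p * n \<le> N" "(real p, real n) \<notin> Rect_i N i"
    and avoid: "\<And>j k. 1 \<le> j \<Longrightarrow> j \<le> J \<Longrightarrow> 2 ^ (j - 1) \<le> k \<Longrightarrow> k \<le> 2 ^ j \<Longrightarrow>
                  (real p, real n) \<notin> Rect_ijk N i j k"
    by (auto simp: avoiding_primes_def)
  have dyadic: "n * 2 ^ i \<le> N" "N < n * 2 ^ (i + 1)"
    using floor_log_div_bounds[OF assms(1,2)] assms(3) by simp_all
  then have p_gt: "2 ^ i < p"
    using p(1,3) by (intro gt_of_not_in_Rect_i) (auto dest: prime_gt_0_nat)
  define u where "u = real N / real n"
  define T :: real where "T = 2 ^ (i + J)"
  have n_pos: "real n > 0"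
    using assms(1) by simp
  have "real (n * 2 ^ i) \<le> real N" "real N < real (n * 2 ^ (i + 1))"
    using dyadic by (simp_all only: of_nat_le_iff of_nat_less_iff)
  then have u_bounds: "2 ^ i \<le> u" "u < 2 ^ (i + 1)"
    using n_pos by (simp_all add: u_def field_simps)
  then have u_pos: "u > 0"
    by (auto intro: less_le_trans[of 0 "2 ^ i"])
  have "T < real p * \<lceil>T / u\<rceil>"
    using avoiding_rectangles_ceiling_bound[OF dyadic _ avoid order_refl] p_gt n_pos
    by (simp add: T_def u_def field_simps)
  then have "u - u\<^sup>2 / T < real p"
    using u_pos by (intro sub_sq_div_lt_of_ceiling_bound) (auto simp: T_def)
  moreover have "u\<^sup>2 / T \<le> (2 ^ (i + 1))\<^sup>2 / T"
    using u_bounds u_pos by (intro divide_right_mono power_mono) (auto simp: T_def)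
  moreover have "(2 ^ (i + 1))\<^sup>2 / T = 2 ^ (i + 2 - J)"
  proof -
    have "(i + 2 - J) + (i + J) = (i + 1) * 2"
      using assms(4) by simp
    then have "(2::real) ^ (i + 2 - J) * T = (2 ^ (i + 1))\<^sup>2"
      unfolding T_def by (metis power_add power_mult)
    then show ?thesis
      by (simp add: T_def field_simps)
  qed
  moreover have "real (N div n) \<le> u"
    unfolding u_def by (rule of_nat_div_le_of_nat)
  ultimately have "real (N div n) < real (p + 2 ^ (i + 2 - J))"
    by simp
  then have "N div n < p + 2 ^ (i + 2 - J)"
    by (simp only: of_nat_less_iff)
  moreover have "p \<le> N div n"
    using p(2) assms(1) by (simp add: less_eq_div_iff_mult_less_eq)
  ultimately show "p \<in> {p. prime p \<and> max (2 ^ i) (N div n - 2 ^ (i + 2 - J)) < p \<and> p \<le> N div n}"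
    using p(1) p_gt by auto
qed

lemma sum_ln_avoiding_primes_le:
  fixes N n i J :: nat
  assumes "1 \<le> n" "n \<le> N" "i = floor_log (N div n)" "1 \<le> J" "J \<le> i + 1"
  shows "(\<Sum>p\<in>avoiding_primes N i J n. ln (real p)) \<le> 4 * 2 ^ i * real J / 2 ^ J"
proof -
  have "1 \<le> N div n"
    using div_le_mono[OF assms(2), of n] assms(1) by simp
  then have B_bounds: "2 ^ i \<le> N div n" "N div n < 2 ^ (i + 1)"
    using floor_log_exp2_le[of "N div n"] floor_log_exp2_gt[of "N div n"] assms(3) by simp_all
  have "(\<Sum>p\<in>avoiding_primes N i J n. ln (real p))
      \<le> (\<Sum>p | prime p \<and> max (2 ^ i) (N div n - 2 ^ (i + 2 - J)) < p \<and> p \<le> N div n. ln (real p))"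
    using avoiding_primes_subset_top_interval[OF assms(1-3,5)]
    by (intro sum_mono2) auto
  also have "\<dots> \<le> 4 * 2 ^ i * real J / 2 ^ J"
    using B_bounds assms(4,5) by (rule sum_ln_primes_in_top_interval_le)
  finally show ?thesis .
qed

section \<open>The size of the rectangles\<close>

lemma valid_ijk_bounds:
  assumes "0 < N" "0 < s" "valid_ijk N s i j k"
  shows "(2::real) ^ (i + j) \<le> 2 * real N" "((2::real) ^ j)\<^sup>2 \<le> 64 * real N / s"
proof -
  have "int j \<le> \<lfloor>log 2 (real N)\<rfloor> - int i + 1" "int j \<le> \<lfloor>log 2 (64 * real N / s) / 2\<rfloor>"
    using assms(3) by (simp_all add: valid_ijk_def Jidx_def)
  then have "real (i + j) \<le> log 2 (2 * real N)" "real (2 * j) \<le> log 2 (64 * real N / s)"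
    using assms(1) by (simp_all add: log_mult) linarith+
  then show "(2::real) ^ (i + j) \<le> 2 * real N" "((2::real) ^ j)\<^sup>2 \<le> 64 * real N / s"
    using assms(1,2) by (simp_all add: le_log_iff powr_realpow power_mult[symmetric] mult.commute[of 2]
        del: of_nat_add of_nat_mult)
qed

lemma Rect_ijk_dimensions:
  assumes "0 < N" "0 < s" "valid_ijk N s i j k"
  shows "\<exists>P P' N1 N1'. Rect_ijk N i j k = {P<..P'} \<times> {N1<..N1'}
           \<and> P' - P \<ge> 1/4 \<and> N1' - N1 \<ge> 1/4 \<and> (P' - P) * (N1' - N1) \<ge> 1/256 * s"
proof -
  have j: "1 \<le> j" "j \<le> i + 1" and k: "2 ^ (j - 1) \<le> k" "k \<le> 2 ^ j"
    using assms(3) by (auto simp: valid_ijk_def Jidx_def)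
  note bounds = valid_ijk_bounds[OF assms]
  define T :: real where "T = 2 ^ (i + j)"
  have "1 \<le> k"
    using k(1) by (metis le_trans one_le_numeral one_le_power)
  moreover have "real k \<le> real (2 ^ j)"
    using k(2) by (simp only: of_nat_le_iff)
  ultimately have k_real: "1 \<le> real k" "real k \<le> 2 ^ j"
    by simp_all
  have "real k * (2 * real k - 1) \<le> 2 ^ j * (2 * 2 ^ j)"
    by (intro mult_mono; use k_real in linarith)
  then have kk: "real k * (2 * real k - 1) \<le> 2 * (2 ^ j)\<^sup>2"
    by (simp add: power2_eq_square mult_ac)
  have "(2::real) ^ j \<le> 2 ^ (i + 1)"
    using j by (intro power_increasing) auto
  then have "2 * ((2::real) ^ j)\<^sup>2 \<le> 4 * T"
    by (simp add: T_def power2_eq_square power_add)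
  then have kk_T: "real k * (2 * real k - 1) \<le> 4 * T"
    using kk by linarith
  have T_pos: "T > 0" and k_pos: "real k * (2 * real k - 1) > 0"
    using k_real by (simp_all add: T_def)
  show ?thesis
  proof (intro exI conjI)
    show "Rect_ijk N i j k = {T / real k<..2 * T / (2 * real k - 1)}
        \<times> {(real k - 1) * real N / T<..(2 * real k - 1) * real N / (2 * T)}"
      by (simp add: Rect_ijk_def T_def)
    have dP: "2 * T / (2 * real k - 1) - T / real k = T / (real k * (2 * real k - 1))"
      using k_real by (simp add: field_simps)
    have dN: "(2 * real k - 1) * real N / (2 * T) - (real k - 1) * real N / T = real N / (2 * T)"
      using T_pos by (simp add: field_simps)
    show "2 * T / (2 * real k - 1) - T / real k \<ge> 1/4"
      unfolding dP using kk_T k_pos by (simp add: field_simps)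
    show "(2 * real k - 1) * real N / (2 * T) - (real k - 1) * real N / T \<ge> 1/4"
      unfolding dN using bounds(1) T_pos by (simp add: T_def field_simps)
    have "1/256 * s \<le> real N / (4 * (2 ^ j)\<^sup>2)"
      using bounds(2) assms(2) by (simp add: field_simps)
    also have "\<dots> \<le> real N / (2 * (real k * (2 * real k - 1)))"
      using kk k_pos by (intro divide_left_mono) auto
    also have "\<dots> = (2 * T / (2 * real k - 1) - T / real k)
        * ((2 * real k - 1) * real N / (2 * T) - (real k - 1) * real N / T)"
      unfolding dP dN using T_pos k_pos by (simp add: field_simps)
    finally show "(2 * T / (2 * real k - 1) - T / real k)
        * ((2 * real k - 1) * real N / (2 * T) - (real k - 1) * real N / T) \<ge> 1/256 * s" .
  qed
qed

section \<open>The sum over the scales\<close>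

lemma sum_succ_div_power2_eq: "(\<Sum>t<n. real (t + 1) / 2 ^ (t + 1)) = 2 - (real n + 2) / 2 ^ n"
  by (induction n) (simp_all add: field_simps)

lemma sum_succ_div_power2_le: "(\<Sum>t<n. real (t + 1) / 2 ^ (t + 1)) \<le> 2"
  by (simp only: sum_succ_div_power2_eq) simp

lemma le_add_at_min3:
  fixes f :: "nat \<Rightarrow> real"
  assumes "\<And>t. 0 \<le> f t"
  shows "f (min a (min b c)) \<le> f a + f b + (if c \<le> a \<and> c \<le> b then f c else 0)"
  using assms[of a] assms[of b] assms[of c] by (auto simp: min_def)

lemma card_central_indices_le:
  fixes L M :: nat
  shows "real (card {i\<in>{..L}. M \<le> i + 1 \<and> M \<le> L - i + 1}) \<le> max 0 (real L + 3 - 2 * real M)"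
proof (cases "{i\<in>{..L}. M \<le> i + 1 \<and> M \<le> L - i + 1} = {}")
  case False
  then obtain i0 where i0: "i0 \<le> L" "M \<le> i0 + 1" "M \<le> L - i0 + 1"
    by auto
  have "card {i\<in>{..L}. M \<le> i + 1 \<and> M \<le> L - i + 1} \<le> card {M - 1..L + 1 - M}"
    by (intro card_mono) auto
  also have "\<dots> \<le> L + 3 - 2 * M"
    using i0 by (cases M) auto
  finally show ?thesis
    using i0 by linarith
next
  case True
  then show ?thesis
    by (simp only: card.empty)
qed

text \<open>The third entry \<open>M\<close> of the minimum is attained only for the indices \<open>i\<close> in the middle
  of \<open>[0, L]\<close>; the other two entries give two convergent series.\<close>

lemma sum_min3_div_power2_le:
  fixes L M :: nat
  defines "\<psi> \<equiv> \<lambda>t::nat. real t / 2 ^ t"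
  shows "(\<Sum>i\<le>L. \<psi> (min (i + 1) (min (L - i + 1) M))) \<le> 4 + max 0 (real L + 3 - 2 * real M) * \<psi> M"
proof -
  have \<psi>_nonneg: "0 \<le> \<psi> t" for t
    by (simp add: \<psi>_def)
  have "(\<Sum>i\<le>L. \<psi> (min (i + 1) (min (L - i + 1) M)))
      \<le> (\<Sum>i\<le>L. \<psi> (i + 1) + \<psi> (L - i + 1) + (if M \<le> i + 1 \<and> M \<le> L - i + 1 then \<psi> M else 0))"
    by (intro sum_mono le_add_at_min3 \<psi>_nonneg)
  also have "\<dots> = (\<Sum>i\<le>L. \<psi> (i + 1)) + (\<Sum>i\<le>L. \<psi> (L - i + 1))
      + real (card {i\<in>{..L}. M \<le> i + 1 \<and> M \<le> L - i + 1}) * \<psi> M"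
    by (simp add: sum.distrib sum.inter_filter[symmetric])
  also have "\<dots> \<le> 2 + 2 + max 0 (real L + 3 - 2 * real M) * \<psi> M"
  proof (intro add_mono mult_right_mono)
    show "(\<Sum>i\<le>L. \<psi> (i + 1)) \<le> 2"
      using sum_succ_div_power2_le[of "Suc L"] by (simp add: \<psi>_def lessThan_Suc_atMost)
    have "(\<Sum>i\<le>L. \<psi> (L - i + 1)) = (\<Sum>i\<le>L. \<psi> (i + 1))"
      using sum.nat_diff_reindex[of "\<lambda>t. \<psi> (t + 1)" "Suc L"] by (simp add: lessThan_Suc_atMost)
    then show "(\<Sum>i\<le>L. \<psi> (L - i + 1)) \<le> 2"
      using sum_succ_div_power2_le[of "Suc L"] by (simp add: \<psi>_def lessThan_Suc_atMost)
  qed (rule card_central_indices_le, rule \<psi>_nonneg)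
  finally show ?thesis
    by simp
qed

lemma div_power2_near_half_log_le:
  fixes x :: real and M :: nat
  assumes "x > 0" "log 2 x / 2 - 1 \<le> M" "M \<le> log 2 x / 2"
  shows "real M / 2 ^ M \<le> log 2 x / sqrt x"
proof -
  have "2 powr (log 2 x / 2) = (2 powr log 2 x) powr (1 / 2)"
    by (simp add: powr_powr)
  also have "\<dots> = sqrt x"
    using assms(1) by (simp add: powr_half_sqrt)
  finally have "sqrt x / 2 = 2 powr (log 2 x / 2 - 1)"
    by (simp add: powr_diff)
  also have "\<dots> \<le> 2 ^ M"
    using assms(2) by (simp add: powr_realpow[symmetric])
  finally have "sqrt x / 2 \<le> 2 ^ M" .
  moreover have "0 \<le> log 2 x / 2"
    using assms(3) of_nat_0_le_iff[of M] by linarith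
  ultimately have "real M / 2 ^ M \<le> (log 2 x / 2) / (sqrt x / 2)"
    using assms by (intro frac_le) auto
  then show ?thesis
    by simp
qed

lemma ln_2_ge_half: "1 / 2 \<le> ln (2 :: real)"
  using ln_le_minus_one[of "1 / 2 :: real"] by (simp add: ln_div)

lemma log2_le_two_ln:
  fixes x :: real
  assumes "1 \<le> x"
  shows "log 2 x \<le> 2 * ln x"
  using ln_2_ge_half assms mult_left_mono[OF ln_2_ge_half, of "ln x"]
  by (simp add: log_def divide_le_eq)

lemma log2_64_mult_div_bounds:
  fixes N s :: real
  assumes "0 < s" "s \<le> N"
  shows "log 2 (64 * N / s) = 6 + log 2 N - log 2 s"
    and "6 \<le> log 2 (64 * N / s)"
    and "log 2 (64 * N / s) \<le> 12 * ln (2 * N / s)"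
proof -
  have ln_64: "ln (64 :: real) = 6 * ln 2"
    using ln_realpow[of 2 6] by simp
  then show "log 2 (64 * N / s) = 6 + log 2 N - log 2 s"
    using assms by (simp add: log_def ln_mult ln_div field_simps)
  have lg_eq: "log 2 (64 * N / s) = 5 + ln (2 * N / s) / ln 2"
    using assms ln_64 by (simp add: log_def ln_mult ln_div field_simps)
  have u_ge: "ln 2 \<le> ln (2 * N / s)"
    using assms by (simp add: field_simps)
  then have "1 \<le> ln (2 * N / s) / ln 2"
    by simp
  then show "6 \<le> log 2 (64 * N / s)"
    using lg_eq by linarith
  have "ln (2 * N / s) / ln 2 \<le> ln (2 * N / s) / (1 / 2)"
    using ln_2_ge_half u_ge by (intro divide_left_mono) auto
  then show "log 2 (64 * N / s) \<le> 12 * ln (2 * N / s)"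
    using ln_2_ge_half u_ge lg_eq by simp
qed

lemma nat_Jidx_eq:
  assumes "2 \<le> N" "0 < s" "s \<le> real N" "i \<le> floor_log N"
  shows "nat (Jidx N s i) = min (i + 1) (min (floor_log N - i + 1) (nat \<lfloor>log 2 (64 * real N / s) / 2\<rfloor>))"
proof -
  have "0 \<le> \<lfloor>log 2 (64 * real N / s) / 2\<rfloor>"
    using log2_64_mult_div_bounds(2)[OF assms(2,3)] by linarith
  then have "Jidx N s i = int (min (i + 1) (min (floor_log N - i + 1) (nat \<lfloor>log 2 (64 * real N / s) / 2\<rfloor>)))"
    using assms(1,4) floor_log2_of_nat[of N] by (simp add: Jidx_def of_nat_min)
  then show ?thesis
    by simp
qed

lemma Jidx_bounds:
  assumes "2 \<le> N" "2 \<le> s" "s \<le> real N" "i \<le> floor_log N"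
  shows "1 \<le> Jidx N s i" "Jidx N s i \<le> int i + 1"
proof -
  have "6 \<le> log 2 (64 * real N / s)"
    using assms(2,3) by (intro log2_64_mult_div_bounds(2)) auto
  then show "1 \<le> Jidx N s i"
    using assms(1,4) floor_log2_of_nat[of N] by (simp add: Jidx_def)
  show "Jidx N s i \<le> int i + 1"
    by (simp add: Jidx_def)
qed

lemma sum_Jidx_div_power2_le:
  fixes N :: nat and s :: real
  assumes N: "2 \<le> N" and s: "2 \<le> s" "s \<le> real N"
  shows "(\<Sum>i\<le>floor_log N. real (nat (Jidx N s i)) / 2 ^ nat (Jidx N s i))
           \<le> 4 + 3 * sqrt (s / real N) * ln (2 * real N / s) * ln s"
proof -
  define L where "L = floor_log N"
  define lg where "lg = log 2 (64 * real N / s)"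
  define M where "M = nat \<lfloor>lg / 2\<rfloor>"
  define u where "u = ln (2 * real N / s)"
  have N_pos: "real N > 0" and s_pos: "s > 0"
    using N s by simp_all
  note lg_bounds = log2_64_mult_div_bounds[OF s_pos s(2), folded lg_def u_def]
  have M_bounds: "lg / 2 - 1 \<le> M" "M \<le> lg / 2"
    using lg_bounds unfolding M_def by linarith+
  have "real L + 3 - 2 * real M \<le> log 2 s"
    using floor_log2_of_nat[of N] N M_bounds lg_bounds(1) unfolding L_def by linarith
  then have card_le: "max 0 (real L + 3 - 2 * real M) \<le> 2 * ln s"
    using log2_le_two_ln[of s] s by simp
  have "real M / 2 ^ M \<le> lg / sqrt (64 * real N / s)"
    unfolding lg_def using N_pos s_pos M_bounds
    by (intro div_power2_near_half_log_le) (auto simp: lg_def)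
  also have "\<dots> = lg * sqrt (s / real N) / 8"
    using N_pos s_pos by (simp add: real_sqrt_divide real_sqrt_mult field_simps)
  also have "\<dots> \<le> 12 * u * sqrt (s / real N) / 8"
    using lg_bounds s_pos by (intro divide_right_mono mult_right_mono) auto
  finally have psi_M: "real M / 2 ^ M \<le> 12 * u * sqrt (s / real N) / 8" .
  have "(\<Sum>i\<le>L. real (nat (Jidx N s i)) / 2 ^ nat (Jidx N s i))
      = (\<Sum>i\<le>L. real (min (i + 1) (min (L - i + 1) M)) / 2 ^ min (i + 1) (min (L - i + 1) M))"
    using nat_Jidx_eq[OF N s_pos s(2)] by (simp add: L_def M_def lg_def)
  also have "\<dots> \<le> 4 + max 0 (real L + 3 - 2 * real M) * (real M / 2 ^ M)"
    by (rule sum_min3_div_power2_le)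
  also have "\<dots> \<le> 4 + 2 * ln s * (12 * u * sqrt (s / real N) / 8)"
    using card_le psi_M s by (intro add_left_mono mult_mono) auto
  finally show ?thesis
    by (simp add: L_def u_def mult_ac)
qed

lemma sum_dyadic_weights_le:
  assumes "2 \<le> N" "2 \<le> s" "s \<le> real N"
  shows "(\<Sum>i\<le>floor_log N. 4 * 2 ^ i * real (nat (Jidx N s i)) / 2 ^ nat (Jidx N s i) * (real N / 2 ^ i))
           \<le> 16 * (real N + sqrt (real N * s) * ln (2 * real N / s) * ln s)"
proof -
  have N_pos: "real N > 0"
    using assms(1) by simp
  have sqrt_eq: "real N * sqrt (s / real N) = sqrt (real N * s)"
    using N_pos assms(2) by (simp add: real_sqrt_divide real_sqrt_mult field_simps)
  have "(\<Sum>i\<le>floor_log N. 4 * 2 ^ i * real (nat (Jidx N s i)) / 2 ^ nat (Jidx N s i) * (real N / 2 ^ i))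
      = 4 * real N * (\<Sum>i\<le>floor_log N. real (nat (Jidx N s i)) / 2 ^ nat (Jidx N s i))"
    by (simp add: sum_distrib_left field_simps)
  also have "\<dots> \<le> 4 * real N * (4 + 3 * sqrt (s / real N) * ln (2 * real N / s) * ln s)"
    using sum_Jidx_div_power2_le[OF assms] N_pos by (intro mult_left_mono) auto
  also have "\<dots> = 16 * real N + 12 * sqrt (real N * s) * ln (2 * real N / s) * ln s"
    unfolding sqrt_eq[symmetric] by (simp add: algebra_simps)
  also have "\<dots> \<le> 16 * (real N + sqrt (real N * s) * ln (2 * real N / s) * ln s)"
    using assms N_pos by (simp add: field_simps)
  finally show ?thesis .
qed

section \<open>The sum over the exceptional set\<close>

lemma exc_set_subset: "exc_set N s \<subseteq> {..N} \<times> {1..N}"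
proof
  fix x assume "x \<in> exc_set N s"
  then obtain p n where x: "x = (p, n)" "prime p" "1 \<le> n" "p * n \<le> N"
    by (auto simp: exc_set_def)
  have "p * 1 \<le> p * n" "1 * n \<le> p * n"
    using x(3) prime_gt_0_nat[OF x(2)] by (intro mult_le_mono; simp)+
  then have "p \<le> N" "n \<le> N"
    using x(4) by linarith+
  then show "x \<in> {..N} \<times> {1..N}"
    using x by simp
qed

lemma sum_exc_set_by_fibres:
  "(\<Sum>(p, n)\<in>exc_set N s. h p n) = (\<Sum>n=1..N. \<Sum>p | (p, n) \<in> exc_set N s. h p n)"
proof -
  have "exc_set N s = (SIGMA p:{..N}. {n. n \<in> {1..N} \<and> (p, n) \<in> exc_set N s})"
    using exc_set_subset by blast
  then have "(\<Sum>(p, n)\<in>exc_set N s. h p n)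
      = (\<Sum>p\<in>{..N}. \<Sum>n | n \<in> {1..N} \<and> (p, n) \<in> exc_set N s. h p n)"
    by (simp add: sum.Sigma)
  also have "\<dots> = (\<Sum>n=1..N. \<Sum>p | p \<in> {..N} \<and> (p, n) \<in> exc_set N s. h p n)"
    by (rule sum.swap_restrict) auto
  also have "\<dots> = (\<Sum>n=1..N. \<Sum>p | (p, n) \<in> exc_set N s. h p n)"
    using exc_set_subset by (intro sum.cong refl arg_cong[where f = "\<lambda>A. sum _ A"]) blast
  finally show ?thesis .
qed

lemma exc_fibre_subset_avoiding_primes:
  assumes "i = floor_log (N div n)"
  shows "{p. (p, n) \<in> exc_set N s} \<subseteq> avoiding_primes N i (nat (Jidx N s i)) n"
proof
  fix p assume "p \<in> {p. (p, n) \<in> exc_set N s}"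
  then have p: "prime p" "1 \<le> n" "p * n \<le> N"
    and not_in: "\<And>i. real i \<le> log 2 (real N) \<Longrightarrow> (real p, real n) \<notin> Rect_i N i"
      "\<And>i j k. valid_ijk N s i j k \<Longrightarrow> (real p, real n) \<notin> Rect_ijk N i j k"
    by (auto simp: exc_set_def)
  have "1 \<le> p * n"
    using p prime_gt_0_nat[of p] by simp
  then have "1 \<le> N"
    using p(3) by linarith
  moreover have "N div n \<le> N"
    by simp
  ultimately have "real i \<le> log 2 (real N)"
    using floor_log_le_iff[of "N div n" N] floor_log2_of_nat[of N] assms by linarith
  then show "p \<in> avoiding_primes N i (nat (Jidx N s i)) n"
    using p not_in by (auto simp: avoiding_primes_def valid_ijk_def)
qed

lemma sum_ln_exc_fibre_le:
  fixes N n i :: nat and s :: real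
  assumes "2 \<le> N" "2 \<le> s" "s \<le> real N" "1 \<le> n" "n \<le> N" "i = floor_log (N div n)"
  shows "(\<Sum>p | (p, n) \<in> exc_set N s. ln (real p))
           \<le> 4 * 2 ^ i * real (nat (Jidx N s i)) / 2 ^ nat (Jidx N s i)"
proof -
  have "i \<le> floor_log N"
    using assms(6) by (simp add: floor_log_le_iff)
  then have "1 \<le> Jidx N s i" "Jidx N s i \<le> int i + 1"
    using Jidx_bounds[OF assms(1-3)] by blast+
  then have J_bounds: "1 \<le> nat (Jidx N s i)" "nat (Jidx N s i) \<le> i + 1"
    by (simp_all add: nat_le_iff le_nat_iff)
  have "avoiding_primes N i (nat (Jidx N s i)) n \<subseteq> {..N}"
  proof
    fix p assume "p \<in> avoiding_primes N i (nat (Jidx N s i)) n"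
    then have "p * 1 \<le> p * n" "p * n \<le> N"
      using mult_le_mono2[OF assms(4)] by (simp_all add: avoiding_primes_def)
    then show "p \<in> {..N}"
      by (metis atMost_iff le_trans mult.right_neutral)
  qed
  then have "finite (avoiding_primes N i (nat (Jidx N s i)) n)"
    by (rule finite_subset) simp
  moreover have "0 \<le> ln (real p)" if "p \<in> avoiding_primes N i (nat (Jidx N s i)) n" for p
    using that prime_ge_1_nat by (simp add: avoiding_primes_def)
  ultimately have "(\<Sum>p | (p, n) \<in> exc_set N s. ln (real p))
      \<le> (\<Sum>p\<in>avoiding_primes N i (nat (Jidx N s i)) n. ln (real p))"
    using exc_fibre_subset_avoiding_primes[OF assms(6)] by (intro sum_mono2) auto
  also have "\<dots> \<le> 4 * 2 ^ i * real (nat (Jidx N s i)) / 2 ^ nat (Jidx N s i)"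
    using assms(4-6) J_bounds by (rule sum_ln_avoiding_primes_le)
  finally show ?thesis .
qed

lemma sum_over_dyadic_blocks_le:
  fixes a w :: "nat \<Rightarrow> real" and N :: nat
  assumes "\<And>n. 0 \<le> a n" "\<And>i. 0 \<le> w i"
  shows "(\<Sum>n=1..N. a n * w (floor_log (N div n)))
           \<le> (\<Sum>i\<le>floor_log N. w i * (\<Sum>n=1..N div 2 ^ i. a n))"
proof -
  have "(\<Sum>n=1..N. a n * w (floor_log (N div n)))
      = (\<Sum>i\<le>floor_log N. \<Sum>n | n \<in> {1..N} \<and> floor_log (N div n) = i. a n * w (floor_log (N div n)))"
    by (rule sum.group[symmetric]) (auto simp: floor_log_le_iff)
  also have "\<dots> = (\<Sum>i\<le>floor_log N. w i * (\<Sum>n | n \<in> {1..N} \<and> floor_log (N div n) = i. a n))"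
    by (intro sum.cong refl) (auto simp: sum_distrib_left mult.commute)
  also have "\<dots> \<le> (\<Sum>i\<le>floor_log N. w i * (\<Sum>n=1..N div 2 ^ i. a n))"
  proof (intro sum_mono mult_left_mono sum_mono2)
    fix i
    show "{n \<in> {1..N}. floor_log (N div n) = i} \<subseteq> {1..N div 2 ^ i}"
      using floor_log_div_bounds(1) by (auto simp: less_eq_div_iff_mult_less_eq mult.commute)
  qed (use assms in auto)
  finally show ?thesis .
qed

lemma sum_norm_upto_div_power2_le:
  fixes f :: "nat \<Rightarrow> complex" and N i :: nat and C1 :: real
  assumes f_mean: "\<forall>X::real. X \<ge> 1 \<longrightarrow> (\<Sum>n\<in>{1..nat \<lfloor>X\<rfloor>}. norm (f n)) \<le> C1 * X"
    and "2 ^ i \<le> N"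
  shows "(\<Sum>n=1..N div 2 ^ i. norm (f n)) \<le> C1 * (real N / 2 ^ i)"
proof -
  have "real (2 ^ i) \<le> real N"
    using assms(2) by (simp only: of_nat_le_iff)
  then have "1 \<le> real N / 2 ^ i"
    by simp
  moreover have "nat \<lfloor>real N / 2 ^ i\<rfloor> = N div 2 ^ i"
    using floor_divide_of_nat_eq[of N "2 ^ i", where ?'a = real] by simp
  ultimately show ?thesis
    using f_mean by metis
qed

lemma norm_exc_sum_le:
  fixes f :: "nat \<Rightarrow> complex" and g :: "nat \<Rightarrow> real" and N :: nat and s C0 C1 :: real
  assumes f_prime: "\<forall>p. prime p \<longrightarrow> norm (f p) \<le> C0"
    and f_mean: "\<forall>X::real. X \<ge> 1 \<longrightarrow> (\<Sum>n\<in>{1..nat \<lfloor>X\<rfloor>}. norm (f n)) \<le> C1 * X"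
    and N: "2 \<le> N" and s: "2 \<le> s" "s \<le> real N"
  shows "norm (\<Sum>(p, n)\<in>exc_set N s. f p * complex_of_real (ln (real p)) * f n * e (g (p * n)))
           \<le> 16 * C0 * C1 * (real N + sqrt (real N * s) * ln (2 * real N / s) * ln s)"
proof -
  define w where "w i = 4 * 2 ^ i * real (nat (Jidx N s i)) / 2 ^ nat (Jidx N s i)" for i
  have C0: "0 \<le> C0"
    using f_prime two_is_prime_nat norm_ge_zero order_trans by blast
  have C1: "0 \<le> C1"
    using f_mean[rule_format, of 1] by simp (meson norm_ge_zero order_trans)
  have "norm (\<Sum>(p, n)\<in>exc_set N s. f p * complex_of_real (ln (real p)) * f n * e (g (p * n)))
      \<le> (\<Sum>(p, n)\<in>exc_set N s. C0 * ln (real p) * norm (f n))"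
  proof (rule order_trans[OF norm_sum sum_mono], clarify)
    fix p n assume "(p, n) \<in> exc_set N s"
    then have "prime p"
      by (simp add: exc_set_def)
    then show "norm (f p * complex_of_real (ln (real p)) * f n * e (g (p * n)))
        \<le> C0 * ln (real p) * norm (f n)"
      using f_prime prime_ge_1_nat[of p]
      by (simp add: norm_mult e_def mult_right_mono)
  qed
  also have "\<dots> = (\<Sum>n=1..N. C0 * norm (f n) * (\<Sum>p | (p, n) \<in> exc_set N s. ln (real p)))"
    by (simp add: sum_exc_set_by_fibres sum_distrib_left sum_distrib_right mult_ac)
  also have "\<dots> \<le> (\<Sum>n=1..N. C0 * norm (f n) * w (floor_log (N div n)))"
    using sum_ln_exc_fibre_le[OF N s] C0 unfolding w_def
    by (intro sum_mono mult_left_mono) auto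
  also have "\<dots> \<le> (\<Sum>i\<le>floor_log N. w i * (\<Sum>n=1..N div 2 ^ i. C0 * norm (f n)))"
    using C0 by (intro sum_over_dyadic_blocks_le) (auto simp: w_def)
  also have "\<dots> \<le> (\<Sum>i\<le>floor_log N. w i * (C0 * (C1 * (real N / 2 ^ i))))"
  proof (intro sum_mono mult_left_mono)
    fix i assume "i \<in> {..floor_log N}"
    then have "(2::nat) ^ i \<le> 2 ^ floor_log N"
      by (intro power_increasing) auto
    then have "(2::nat) ^ i \<le> N"
      using floor_log_exp2_le[of N] N by linarith
    then have "(\<Sum>n=1..N div 2 ^ i. norm (f n)) \<le> C1 * (real N / 2 ^ i)"
      by (rule sum_norm_upto_div_power2_le[OF f_mean])
    then show "(\<Sum>n=1..N div 2 ^ i. C0 * norm (f n)) \<le> C0 * (C1 * (real N / 2 ^ i))"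
      unfolding sum_distrib_left[symmetric] using C0 by (rule mult_left_mono)
  qed (auto simp: w_def)
  also have "\<dots> = C0 * C1 * (\<Sum>i\<le>floor_log N. w i * (real N / 2 ^ i))"
    by (simp add: sum_distrib_left mult_ac)
  also have "\<dots> \<le> C0 * C1 * (16 * (real N + sqrt (real N * s) * ln (2 * real N / s) * ln s))"
    using sum_dyadic_weights_le[OF N s] C0 C1 unfolding w_def by (intro mult_left_mono) auto
  finally show ?thesis
    by (simp add: mult_ac)
qed

lemma norm_exc_sum_le_log_power:
  fixes f :: "nat \<Rightarrow> complex" and g :: "nat \<Rightarrow> real" and N :: nat and s C0 C1 \<epsilon> :: real
  assumes "\<forall>p. prime p \<longrightarrow> norm (f p) \<le> C0"
    and "\<forall>X::real. X \<ge> 1 \<longrightarrow> (\<Sum>n\<in>{1..nat \<lfloor>X\<rfloor>}. norm (f n)) \<le> C1 * X"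
    and "2 \<le> N" "2 \<le> s" "s \<le> real N" "\<epsilon> > 0"
  shows "norm (\<Sum>(p, n)\<in>exc_set N s. f p * complex_of_real (ln (real p)) * f n * e (g (p * n)))
           \<le> 16 * C0 * C1 / ln 2 powr \<epsilon> * ln (real N) powr \<epsilon>
              * (real N + sqrt (real N * s) * ln (2 * real N / s) * ln s)"
proof -
  let ?B = "16 * C0 * C1 * (real N + sqrt (real N * s) * ln (2 * real N / s) * ln s)"
  have bound: "norm (\<Sum>(p, n)\<in>exc_set N s. f p * complex_of_real (ln (real p)) * f n * e (g (p * n)))
      \<le> ?B"
    by (rule norm_exc_sum_le[OF assms(1-5)])
  have "1 \<le> ln (real N) powr \<epsilon> / ln 2 powr \<epsilon>"
    using assms(3,6) by (simp add: powr_mono2)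
  then have "?B * 1 \<le> ?B * (ln (real N) powr \<epsilon> / ln 2 powr \<epsilon>)"
    using order_trans[OF norm_ge_zero bound] by (rule mult_left_mono)
  also have "\<dots> = 16 * C0 * C1 / ln 2 powr \<epsilon> * ln (real N) powr \<epsilon>
      * (real N + sqrt (real N * s) * ln (2 * real N / s) * ln s)"
    by simp
  finally show ?thesis
    using bound by simp
qed

theorem mainTheorem6:
  shows "(\<exists>c>0. \<forall>(N::nat) (s::real) i j k.
            2 \<le> N \<and> 2 \<le> s \<and> s \<le> real N \<and> valid_ijk N s i j k \<longrightarrow>
            (\<exists>P P' N1 N1'. Rect_ijk N i j k = {P<..P'} \<times> {N1<..N1'}
               \<and> P' - P \<ge> 1/4 \<and> N1' - N1 \<ge> 1/4 \<and> (P' - P) * (N1' - N1) \<ge> c * s))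
   \<and> (\<forall>(A::real) (C0::real) (C1::real) (\<epsilon>::real). \<epsilon> > 0 \<longrightarrow>
       (\<exists>K. \<forall>(f::nat \<Rightarrow> complex) (g::nat \<Rightarrow> real) (N::nat) (s::real).
          multiplicative f
          \<and> (\<forall>p. prime p \<longrightarrow> norm (f p) \<le> C0)
          \<and> (\<forall>X::real. X \<ge> 1 \<longrightarrow> (\<Sum>n\<in>{1..nat \<lfloor>X\<rfloor>}. norm (f n)) \<le> C1 * X)
          \<and> (\<forall>X::real. X \<ge> 2 \<longrightarrow>
               (\<Sum>n\<in>{1..nat \<lfloor>X\<rfloor>}. (norm (f n))^2) \<le> C1 * X * (ln X) powr A)
          \<and> 2 \<le> N \<and> 2 \<le> s \<and> s \<le> real N
          \<longrightarrow> norm (\<Sum>(p, n)\<in>exc_set N s. f p * complex_of_real (ln (real p)) * f n * e (g (p * n)))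
              \<le> K * (ln (real N)) powr \<epsilon> *
                 (real N + sqrt (real N * s) * ln (2 * real N / s) * ln s)))"
proof (intro conjI allI impI, goal_cases)
  case 1
  show ?case
    using Rect_ijk_dimensions by (intro exI[of _ "1/256"]) auto
next
  case (2 A C0 C1 \<epsilon>)
  show ?case
    using norm_exc_sum_le_log_power \<open>\<epsilon> > 0\<close>
    by (intro exI[of _ "16 * C0 * C1 / ln 2 powr \<epsilon>"] allI impI) blast
qed

end
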